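(* Let $G=(V,E)$ be a connected simple graph with $|V|\ge2$. Then $$\varepsilon(G)\le\frac12\sum_{v\in V}\varepsilon(G\setminus v),$$ where $G\setminus v$ is the subgraph induced on $V\setminus\{v\}$.
   Context: For an undirected simple graph $G=(V,E)$, $\varepsilon(G)$ denotes the maximum, over all acyclic orientations of $E$, of the number of linear extensions of the partial order induced on $V$ (where $u<v$ iff there is a directed path from $u$ to $v$; a linear extension of a poset on an $n$-element set is an order-preserving bijection onto $[n]$). *)

theory Defs
  imports Complex_Main
begin

definition simple_graph :: "'a set \<Rightarrow> 'a set set \<Rightarrow> bool" where
  "simple_graph V E \<longleftrightarrow> finite V \<and> (\<forall>e\<in>E. e \<subseteq> V \<and> card e = 2)"

definition adj_rel :: "'a set set \<Rightarrow> ('a \<times> 'a) set" where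
  "adj_rel E = {(u, v). {u, v} \<in> E}"

definition connected_graph :: "'a set \<Rightarrow> 'a set set \<Rightarrow> bool" where
  "connected_graph V E \<longleftrightarrow> (\<forall>u\<in>V. \<forall>w\<in>V. (u, w) \<in> (adj_rel E)\<^sup>*)"

definition orientation :: "'a set set \<Rightarrow> ('a \<times> 'a) set \<Rightarrow> bool" where
  "orientation E D \<longleftrightarrow>
     (\<forall>(u, v)\<in>D. {u, v} \<in> E) \<and>
     (\<forall>e\<in>E. \<forall>u v. e = {u, v} \<longrightarrow> ((u, v) \<in> D \<longleftrightarrow> (v, u) \<notin> D))"

definition acyclic_orientations :: "'a set set \<Rightarrow> ('a \<times> 'a) set set" where
  "acyclic_orientations E = {D. orientation E D \<and> acyclic D}"

definition linear_extensions :: "'a set \<Rightarrow> ('a \<times> 'a) set \<Rightarrow> ('a \<Rightarrow> nat) set" where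
  "linear_extensions V D =
     {f. bij_betw f V {1..card V} \<and>
         (\<forall>u\<in>V. \<forall>v\<in>V. (u, v) \<in> D\<^sup>+ \<longrightarrow> f u < f v) \<and>
         (\<forall>x. x \<notin> V \<longrightarrow> f x = 0)}"

definition eps :: "'a set \<Rightarrow> 'a set set \<Rightarrow> nat" where
  "eps V E = Max ((\<lambda>D. card (linear_extensions V D)) ` acyclic_orientations E)"

definition delete_vertex_edges :: "'a set set \<Rightarrow> 'a \<Rightarrow> 'a set set" where
  "delete_vertex_edges E v = {e\<in>E. v \<notin> e}"

end

theory Submission
  imports Defs
begin

text \<open>
  Choose an acyclic orientation D of E attaining eps V E and let L be
  its set of linear extensions (rankings V \<rightarrow> {1..n}).  Counting L by the vertex
  ranked first, and again by the vertex ranked last, gives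
    2 |L| = \<Sum>v. (#{f \<in> L. f v = 1} + #{f \<in> L. f v = n}).
  Deleting v from a ranking that puts v at a fixed position k (and closing the gap)
  is injective and yields a linear extension of the restriction of D to V - {v},
  which is an acyclic orientation of G \<setminus> v; so each summand is at most
  eps (G \<setminus> v).  Finally, since G is connected with at least two vertices, v has a
  neighbour y, and the arc between v and y forbids v from being ranked first in
  some extension and last in another; hence one of the two summands is zero.
\<close>

section \<open>Acyclic orientations and the maximum eps\<close>

text \<open>Every orientation of a simple graph consists of arcs between vertices, so
  there are only finitely many.\<close>

lemma finite_acyclic_orientations:
  assumes "simple_graph V E"
  shows "finite (acyclic_orientations E)"
proof -
  have "acyclic_orientations E \<subseteq> Pow (V \<times> V)"
  proof
    fix D assume "D \<in> acyclic_orientations E"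
    hence "\<forall>(u, v)\<in>D. {u, v} \<in> E" by (simp add: acyclic_orientations_def orientation_def)
    with assms show "D \<in> Pow (V \<times> V)" by (fastforce simp: simple_graph_def)
  qed
  moreover have "finite V" using assms by (simp add: simple_graph_def)
  ultimately show ?thesis by (meson finite_Pow_iff finite_SigmaI finite_subset)
qed

text \<open>Orienting each edge from the smaller to the larger label under an injective
  labelling of V gives an acyclic orientation, so the maximum in eps is over a
  nonempty set.\<close>

lemma acyclic_orientations_nonempty:
  assumes "simple_graph V E"
  shows "acyclic_orientations E \<noteq> {}"
proof -
  obtain h :: "'a \<Rightarrow> nat" where h: "inj_on h V"
    using assms finite_imp_inj_to_nat_seg by (metis simple_graph_def)
  define D where "D = {(u, v). {u, v} \<in> E \<and> h u < h v}"
  have "orientation E D"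
    unfolding orientation_def
  proof (intro conjI ballI allI impI)
    show "\<And>x. x \<in> D \<Longrightarrow> case x of (u, v) \<Rightarrow> {u, v} \<in> E" by (auto simp: D_def)
  next
    fix e u v assume e: "e \<in> E" and euv: "e = {u, v}"
    have "card e = 2" "e \<subseteq> V" using assms e by (auto simp: simple_graph_def)
    hence "u \<noteq> v" "u \<in> V" "v \<in> V" using euv by (auto simp: card_insert_if split: if_splits)
    hence "h u \<noteq> h v" using h by (meson inj_onD)
    then show "((u, v) \<in> D) = ((v, u) \<notin> D)" using e euv by (auto simp: D_def insert_commute)
  qed
  moreover have "acyclic D"
  proof -
    have "D \<subseteq> inv_image less_than h" by (auto simp: D_def)
    thus ?thesis by (meson wf_acyclic wf_subset wf_inv_image wf_less_than)
  qed
  ultimately show ?thesis by (auto simp: acyclic_orientations_def)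
qed

lemma eps_attained:
  assumes "simple_graph V E"
  obtains D where "D \<in> acyclic_orientations E" and "eps V E = card (linear_extensions V D)"
proof -
  have "eps V E \<in> (\<lambda>D. card (linear_extensions V D)) ` acyclic_orientations E"
    unfolding eps_def using finite_acyclic_orientations[OF assms] acyclic_orientations_nonempty[OF assms]
    by (intro Max_in) auto
  thus ?thesis using that by auto
qed

lemma card_linear_extensions_le_eps:
  assumes "simple_graph V E" and "D \<in> acyclic_orientations E"
  shows "card (linear_extensions V D) \<le> eps V E"
  unfolding eps_def using finite_acyclic_orientations[OF assms(1)] assms(2) by (intro Max_ge) auto

section \<open>Deleting a vertex\<close>

definition restrict_orientation :: "('a \<times> 'a) set \<Rightarrow> 'a \<Rightarrow> ('a \<times> 'a) set" where
  "restrict_orientation D v = {(a, b)\<in>D. a \<noteq> v \<and> b \<noteq> v}"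

lemma simple_graph_delete_vertex:
  "simple_graph V E \<Longrightarrow> simple_graph (V - {v}) (delete_vertex_edges E v)"
  by (auto simp: simple_graph_def delete_vertex_edges_def)

lemma restrict_orientation_acyclic:
  assumes "D \<in> acyclic_orientations E"
  shows "restrict_orientation D v \<in> acyclic_orientations (delete_vertex_edges E v)"
proof -
  have o: "orientation E D" and a: "acyclic D" using assms by (auto simp: acyclic_orientations_def)
  have "orientation (delete_vertex_edges E v) (restrict_orientation D v)"
    using o unfolding orientation_def delete_vertex_edges_def restrict_orientation_def by fastforce
  moreover have "acyclic (restrict_orientation D v)"
    using a by (rule acyclic_subset) (auto simp: restrict_orientation_def)
  ultimately show ?thesis by (simp add: acyclic_orientations_def)
qed

section \<open>Linear extensions\<close>

lemma linear_extensionsD: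
  assumes "f \<in> linear_extensions V D"
  shows "bij_betw f V {1..card V}"
    and "\<And>u w. u \<in> V \<Longrightarrow> w \<in> V \<Longrightarrow> (u, w) \<in> D\<^sup>+ \<Longrightarrow> f u < f w"
    and "\<And>x. x \<notin> V \<Longrightarrow> f x = 0"
  using assms by (auto simp: linear_extensions_def)

text \<open>Linear extensions are functions from a finite set into a finite range.\<close>

lemma finite_linear_extensions:
  assumes "finite V"
  shows "finite (linear_extensions V D)"
proof -
  have "linear_extensions V D \<subseteq>
      {f. \<forall>x. (x \<in> V \<longrightarrow> f x \<in> {1..card V}) \<and> (x \<notin> V \<longrightarrow> f x = 0)}"
    by (auto simp: linear_extensions_def bij_betw_def)
  then show ?thesis using finite_set_of_finite_funs[OF assms, of "{1..card V}" 0]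
    by (meson finite_atLeastAtMost finite_subset)
qed

text \<open>Every position k is occupied by exactly one vertex, so the linear extensions
  are partitioned according to which vertex sits at position k.\<close>

lemma card_linear_extensions_by_position:
  assumes fin: "finite V" and k: "k \<in> {1..card V}"
  shows "card (linear_extensions V D) = (\<Sum>v\<in>V. card {f \<in> linear_extensions V D. f v = k})"
proof -
  let ?L = "linear_extensions V D"
  have "?L = (\<Union>v\<in>V. {f \<in> ?L. f v = k})"
  proof (intro equalityI subsetI)
    fix f assume f: "f \<in> ?L"
    hence "k \<in> f ` V" using k linear_extensionsD(1)[OF f] by (simp add: bij_betw_def)
    thus "f \<in> (\<Union>v\<in>V. {f \<in> ?L. f v = k})" using f by auto
  qed auto
  moreover have "card (\<Union>v\<in>V. {f \<in> ?L. f v = k}) = (\<Sum>v\<in>V. card {f \<in> ?L. f v = k})"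
  proof (rule card_UN_disjoint[OF fin])
    show "\<forall>v\<in>V. finite {f \<in> ?L. f v = k}" using finite_linear_extensions[OF fin] by auto
    show "\<forall>u\<in>V. \<forall>w\<in>V. u \<noteq> w \<longrightarrow> {f \<in> ?L. f u = k} \<inter> {f \<in> ?L. f w = k} = {}"
      by (auto dest!: linear_extensionsD(1) simp: bij_betw_def inj_on_def)
  qed
  ultimately show ?thesis by simp
qed

text \<open>Closing the gap left by removing position k from {1..n}.\<close>

definition close_gap :: "nat \<Rightarrow> nat \<Rightarrow> nat" where
  "close_gap k n = (if k < n then n - 1 else n)"

lemma close_gap_bij:
  assumes "k \<in> {1..N}"
  shows "bij_betw (close_gap k) ({1..N} - {k}) {1..N - 1}"
  unfolding bij_betw_def
proof
  show "inj_on (close_gap k) ({1..N} - {k})"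
    by (auto simp: inj_on_def close_gap_def split: if_splits)
  show "close_gap k ` ({1..N} - {k}) = {1..N - 1}"
  proof (intro equalityI subsetI)
    fix m assume "m \<in> {1..N - 1}"
    hence "m = close_gap k (if m < k then m else Suc m)"
      and "(if m < k then m else Suc m) \<in> {1..N} - {k}"
      using assms by (auto simp: close_gap_def)
    thus "m \<in> close_gap k ` ({1..N} - {k})" by blast
  qed (use assms in \<open>auto simp: close_gap_def\<close>)
qed

lemma close_gap_strict_mono:
  "m < n \<Longrightarrow> m \<noteq> k \<Longrightarrow> 1 \<le> m \<Longrightarrow> close_gap k m < close_gap k n"
  by (auto simp: close_gap_def)

definition delete_from_ranking :: "('a \<Rightarrow> nat) \<Rightarrow> 'a \<Rightarrow> 'a \<Rightarrow> nat" where
  "delete_from_ranking f v = (\<lambda>x. if x = v then 0 else close_gap (f v) (f x))"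

lemma delete_from_ranking_linear_extension:
  assumes fin: "finite V" and v: "v \<in> V" and f: "f \<in> linear_extensions V D"
  shows "delete_from_ranking f v \<in> linear_extensions (V - {v}) (restrict_orientation D v)"
proof -
  note bij = linear_extensionsD(1)[OF f]
  have fv: "f v \<in> {1..card V}" using bij v by (auto simp: bij_betw_def)
  have "bij_betw f (V - {v}) ({1..card V} - {f v})"
    using bij v by (intro bij_betw_DiffI) (auto simp: bij_betw_def)
  from bij_betw_trans[OF this close_gap_bij[OF fv]]
  have "bij_betw (\<lambda>x. close_gap (f v) (f x)) (V - {v}) {1..card (V - {v})}"
    using fin v by (simp add: comp_def)
  hence "bij_betw (delete_from_ranking f v) (V - {v}) {1..card (V - {v})}"
    by (rule bij_betw_cong[THEN iffD1, rotated]) (simp add: delete_from_ranking_def)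
  moreover have "delete_from_ranking f v u < delete_from_ranking f v w"
    if u: "u \<in> V - {v}" and w: "w \<in> V - {v}" and uw: "(u, w) \<in> (restrict_orientation D v)\<^sup>+" for u w
  proof -
    have "(u, w) \<in> D\<^sup>+" using uw by (rule trancl_mono) (auto simp: restrict_orientation_def)
    hence "f u < f w" using linear_extensionsD(2)[OF f] u w by auto
    moreover have "f u \<noteq> f v" "1 \<le> f u" using bij u v by (auto simp: bij_betw_def inj_on_def)
    ultimately show ?thesis using u w by (simp add: delete_from_ranking_def close_gap_strict_mono)
  qed
  moreover have "delete_from_ranking f v x = 0" if "x \<notin> V - {v}" for x
    using that linear_extensionsD(3)[OF f] by (auto simp: delete_from_ranking_def close_gap_def)
  ultimately show ?thesis unfolding linear_extensions_def by blast
qed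

lemma delete_from_ranking_inj:
  assumes v: "v \<in> V"
  shows "inj_on (\<lambda>f. delete_from_ranking f v) {f \<in> linear_extensions V D. f v = k}"
proof (rule inj_onI, rule ext)
  fix f g x
  assume f: "f \<in> {f \<in> linear_extensions V D. f v = k}" and g: "g \<in> {f \<in> linear_extensions V D. f v = k}"
    and eq: "delete_from_ranking f v = delete_from_ranking g v"
  have bf: "bij_betw f V {1..card V}" and bg: "bij_betw g V {1..card V}"
    using f g by (auto dest: linear_extensionsD(1))
  show "f x = g x"
  proof (cases "x \<in> V - {v}")
    case True
    have k: "k \<in> {1..card V}" using f v bf by (auto dest: bij_betw_apply)
    have "f x \<noteq> k" "g x \<noteq> k"
      using inj_onD[OF bij_betw_imp_inj_on[OF bf], of x v] inj_onD[OF bij_betw_imp_inj_on[OF bg], of x v]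
        True v f g by auto
    hence "f x \<in> {1..card V} - {k}" "g x \<in> {1..card V} - {k}"
      using True bf bg by (auto dest: bij_betw_apply)
    moreover have "close_gap k (f x) = close_gap k (g x)"
      using fun_cong[OF eq, of x] f g True by (simp add: delete_from_ranking_def)
    ultimately show ?thesis
      using bij_betw_imp_inj_on[OF close_gap_bij[OF k]] by (auto dest: inj_onD)
  next
    case False
    thus ?thesis using f g linear_extensionsD(3)[of f V D x] linear_extensionsD(3)[of g V D x] by auto
  qed
qed

lemma card_fixed_position_le_eps_delete:
  assumes G: "simple_graph V E" and D: "D \<in> acyclic_orientations E" and v: "v \<in> V"
  shows "card {f \<in> linear_extensions V D. f v = k} \<le> eps (V - {v}) (delete_vertex_edges E v)"
proof -
  have fin: "finite V" using G by (simp add: simple_graph_def)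
  let ?L' = "linear_extensions (V - {v}) (restrict_orientation D v)"
  have "card {f \<in> linear_extensions V D. f v = k} \<le> card ?L'"
    using fin delete_from_ranking_inj[OF v] delete_from_ranking_linear_extension[OF fin v]
    by (intro card_inj_on_le[OF _ _ finite_linear_extensions]) auto
  also have "\<dots> \<le> eps (V - {v}) (delete_vertex_edges E v)"
    by (intro card_linear_extensions_le_eps simple_graph_delete_vertex G restrict_orientation_acyclic D)
  finally show ?thesis .
qed

section \<open>A vertex with a neighbour is not both a source and a sink\<close>

lemma connected_graph_has_neighbour:
  assumes "simple_graph V E" "connected_graph V E" "card V \<ge> 2" "v \<in> V"
  obtains y where "{v, y} \<in> E" and "y \<in> V"
proof -
  have "\<not> V \<subseteq> {v}"
  proof
    assume "V \<subseteq> {v}"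
    hence "card V \<le> card {v}" by (intro card_mono) auto
    thus False using assms(3) by simp
  qed
  then obtain w where w: "w \<in> V" "w \<noteq> v" by blast
  have "(v, w) \<in> (adj_rel E)\<^sup>*" using assms(2,4) w by (simp add: connected_graph_def)
  then obtain y where "(v, y) \<in> adj_rel E" using w(2) by (blast elim: converse_rtranclE)
  hence vy: "{v, y} \<in> E" by (simp add: adj_rel_def)
  moreover have "y \<in> V" using vy assms(1) by (auto simp: simple_graph_def)
  ultimately show ?thesis using that by blast
qed

text \<open>If v lies on an edge, the arc on that edge either enters v, so v is never
  ranked first, or leaves v, so v is never ranked last.\<close>

lemma first_or_last_impossible:
  assumes D: "orientation E D" and vy: "{v, y} \<in> E" and v: "v \<in> V" and y: "y \<in> V"
  shows "{f \<in> linear_extensions V D. f v = 1} = {} \<or> {f \<in> linear_extensions V D. f v = card V} = {}"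
proof -
  have rank: "f y \<in> {1..card V}" "f a < f b"
    if "f \<in> linear_extensions V D" "(a, b) \<in> D" "a \<in> {v, y}" "b \<in> {v, y}" for f a b
    using that v y linear_extensionsD[OF that(1)] by (auto simp: bij_betw_def)
  have "(v, y) \<in> D \<or> (y, v) \<in> D" using D vy unfolding orientation_def by blast
  thus ?thesis
  proof
    assume "(v, y) \<in> D"
    hence "{f \<in> linear_extensions V D. f v = card V} = {}" using rank by fastforce
    thus ?thesis ..
  next
    assume "(y, v) \<in> D"
    hence "{f \<in> linear_extensions V D. f v = 1} = {}" using rank by fastforce
    thus ?thesis ..
  qed
qed

text \<open>The per-vertex bound: for a vertex with a neighbour, the extensions ranking v
  first together with those ranking v last number at most eps of G with v deleted,
  because one of the two families is empty.\<close>

lemma first_plus_last_le_eps_delete: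
  assumes G: "simple_graph V E" "connected_graph V E" "card V \<ge> 2"
    and D: "D \<in> acyclic_orientations E" and v: "v \<in> V"
  shows "card {f \<in> linear_extensions V D. f v = 1} + card {f \<in> linear_extensions V D. f v = card V}
           \<le> eps (V - {v}) (delete_vertex_edges E v)"
proof -
  obtain y where vy: "{v, y} \<in> E" and y: "y \<in> V"
    using connected_graph_has_neighbour[OF G v] .
  have "orientation E D" using D by (simp add: acyclic_orientations_def)
  from first_or_last_impossible[OF this vy v y]
  show ?thesis using card_fixed_position_le_eps_delete[OF G(1) D v]
    by (elim disjE) (simp_all only: card.empty add_0 add_0_right)
qed

theorem mainTheorem11:
  fixes V :: "'a set" and E :: "'a set set"
  assumes "simple_graph V E"
    and "connected_graph V E"
    and "card V \<ge> 2"
  shows "real (eps V E) \<le> (1/2) * (\<Sum>v\<in>V. real (eps (V - {v}) (delete_vertex_edges E v)))"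
proof -
  have fin: "finite V" using assms(1) by (simp add: simple_graph_def)
  obtain D where D: "D \<in> acyclic_orientations E" and epsD: "eps V E = card (linear_extensions V D)"
    using eps_attained[OF assms(1)] .
  define first where "first v = card {f \<in> linear_extensions V D. f v = 1}" for v
  define last where "last v = card {f \<in> linear_extensions V D. f v = card V}" for v
  have "first v + last v \<le> eps (V - {v}) (delete_vertex_edges E v)" if "v \<in> V" for v
    unfolding first_def last_def by (rule first_plus_last_le_eps_delete[OF assms D that])
  hence "(\<Sum>v\<in>V. first v) + (\<Sum>v\<in>V. last v) \<le> (\<Sum>v\<in>V. eps (V - {v}) (delete_vertex_edges E v))"
    by (simp add: sum.distrib[symmetric] sum_mono)
  moreover have "eps V E = (\<Sum>v\<in>V. first v)" and "eps V E = (\<Sum>v\<in>V. last v)"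
    using card_linear_extensions_by_position[OF fin, of 1 D]
      card_linear_extensions_by_position[OF fin, of "card V" D] assms(3)
    by (simp_all add: epsD first_def last_def)
  ultimately have "2 * eps V E \<le> (\<Sum>v\<in>V. eps (V - {v}) (delete_vertex_edges E v))" by linarith
  hence "real (2 * eps V E) \<le> real (\<Sum>v\<in>V. eps (V - {v}) (delete_vertex_edges E v))"
    by (simp only: of_nat_le_iff)
  thus ?thesis by (simp add: of_nat_sum)
qed

end
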